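(* Let $\mathcal D$ be a family of sets of literals all of whose elements are non-trivial, and let $x\in X$ be a variable such that $\mathcal D$ is $x$-orthogonal. Then $$\mathbf I_x\Big(\bigvee_{C\in\mathcal D}\bigwedge_{\eta\in C}\eta\Big)=2\cdot\mathbf{JW}_x(\mathcal D).$$
   Context: $X$ is a fixed finite set of variables; literals are elements of $X\cup\{\overline z:z\in X\}$ and are interpreted as the Boolean functions $\mathbf u\mapsto\mathbf u(z)$ resp. $1-\mathbf u(z)$ on $\{0,1\}^X$. A family of sets of literals is a set of subsets of $X\cup\{\overline z:z\in X\}$. A set of literals $C$ is trivial if $z\in C$ and $\overline z\in C$ for some variable $z$. $\mathcal D$ is $x$-orthogonal if for all $C\ne C'$ in $\mathcal D$ there is a literal $\eta\notin\{x,\overline x\}$ with $\eta\in C$ and $\overline\eta\in C'$ (where $\overline{\overline z}=z$). The two-sided Jeroslow–Wang value is $\mathbf{JW}_x(\mathcal D)=\sum_{C\in\mathcal D:\,x\in C\text{ or }\overline x\in C}2^{-|C|}$. The influence is $\mathbf I_x(f)=\mathbb E[f_{x/1}\oplus f_{x/0}]$, expectation under the uniform distribution on $\{0,1\}^X$, where $f_{x/c}$ is $f$ with $x$ fixed to $c$. *)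

theory Defs
  imports Complex_Main
begin

text \<open>The variable set X is the (finite) universe of the type 'v.
  Literals are positive or negated variables; assignments are elements of
  {0,1}^X, represented as functions 'v => bool.\<close>

datatype 'v lit = Pos 'v | Neg 'v

fun lit_neg :: "'v lit \<Rightarrow> 'v lit" where
  "lit_neg (Pos z) = Neg z"
| "lit_neg (Neg z) = Pos z"

fun lit_val :: "'v lit \<Rightarrow> ('v \<Rightarrow> bool) \<Rightarrow> bool" where
  "lit_val (Pos z) u = u z"
| "lit_val (Neg z) u = (\<not> u z)"

definition trivial_clause :: "'v lit set \<Rightarrow> bool" where
  "trivial_clause C \<longleftrightarrow> (\<exists>z. Pos z \<in> C \<and> Neg z \<in> C)"

definition x_orthogonal :: "'v \<Rightarrow> 'v lit set set \<Rightarrow> bool" where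
  "x_orthogonal x D \<longleftrightarrow>
     (\<forall>C\<in>D. \<forall>C'\<in>D. C \<noteq> C' \<longrightarrow>
        (\<exists>\<eta>. \<eta> \<notin> {Pos x, Neg x} \<and> \<eta> \<in> C \<and> lit_neg \<eta> \<in> C'))"

definition JW :: "'v \<Rightarrow> 'v lit set set \<Rightarrow> real" where
  "JW x D = (\<Sum>C\<in>{C\<in>D. Pos x \<in> C \<or> Neg x \<in> C}. (1/2) ^ card C)"

definition dnf :: "'v lit set set \<Rightarrow> ('v \<Rightarrow> bool) \<Rightarrow> bool" where
  "dnf D u \<longleftrightarrow> (\<exists>C\<in>D. \<forall>\<eta>\<in>C. lit_val \<eta> u)"

definition uniform_expect :: "(('v::finite \<Rightarrow> bool) \<Rightarrow> real) \<Rightarrow> real" where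
  "uniform_expect g = (\<Sum>u\<in>(UNIV :: ('v \<Rightarrow> bool) set). g u) / real (card (UNIV :: ('v \<Rightarrow> bool) set))"

definition influence :: "'v::finite \<Rightarrow> (('v \<Rightarrow> bool) \<Rightarrow> bool) \<Rightarrow> real" where
  "influence x f = uniform_expect (\<lambda>u. of_bool (f (u(x := True)) \<noteq> f (u(x := False))))"

end

theory Submission
  imports Defs
begin

text \<open>Write \<open>C\<^sub>x\<close> for \<open>C\<close> with the literals \<open>x\<close> and \<open>\<not>x\<close> removed. Flipping \<open>x\<close>
  changes the value of the DNF at \<open>u\<close> exactly when \<open>u\<close> satisfies \<open>C\<^sub>x\<close> for some \<open>C \<in> D\<close>
  mentioning \<open>x\<close>: by \<open>x\<close>-orthogonality \<open>C\<close> is then the only clause \<open>u(x := b)\<close> can satisfy,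
  and being non-trivial it is satisfied for exactly one value of \<open>b\<close>. Orthogonality also makes
  these events disjoint, so the influence is the sum of their probabilities
  \<open>2 ^ -|C\<^sub>x| = 2 * 2 ^ -|C|\<close>.\<close>

fun var :: "'v lit \<Rightarrow> 'v" where
  "var (Pos z) = z"
| "var (Neg z) = z"

definition models :: "'v lit set \<Rightarrow> ('v \<Rightarrow> bool) set" where
  "models C = {u. \<forall>\<eta>\<in>C. lit_val \<eta> u}"

definition residual :: "'v \<Rightarrow> 'v lit set \<Rightarrow> 'v lit set" where
  "residual x C = C - {Pos x, Neg x}"

instance lit :: (finite) finite
proof
  have "(UNIV :: 'a lit set) = range Pos \<union> range Neg"
    by (metis UNIV_eq_I UnI1 UnI2 lit.exhaust rangeI)
  then show "finite (UNIV :: 'a lit set)"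
    by (metis finite_UNIV finite_Un finite_imageI)
qed

lemma lit_val_fun_upd_other: "var \<eta> \<noteq> z \<Longrightarrow> lit_val \<eta> (u(z := b)) = lit_val \<eta> u"
  by (cases \<eta>) auto

lemma lit_val_lit_neg [simp]: "lit_val (lit_neg \<eta>) u \<longleftrightarrow> \<not> lit_val \<eta> u"
  by (cases \<eta>) auto

lemma var_eq_iff: "var \<eta> = var l \<longleftrightarrow> \<eta> = l \<or> \<eta> = lit_neg l"
  by (cases \<eta>; cases l) auto

lemma trivial_clause_iff: "trivial_clause C \<longleftrightarrow> (\<exists>\<eta>\<in>C. lit_neg \<eta> \<in> C)"
  unfolding trivial_clause_def by (metis lit.exhaust lit_neg.simps)

lemma card_models_insert:
  fixes C :: "('v::finite) lit set"
  assumes "var l \<notin> var ` C"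
  shows "2 * card (models (insert l C)) = card (models C)"
proof -
  define flip where "flip u = u(var l := \<not> u (var l))" for u :: "'v \<Rightarrow> bool"
  have flip_C: "lit_val \<eta> (flip u) = lit_val \<eta> u" if "\<eta> \<in> C" for \<eta> u
    using assms that unfolding flip_def by (metis image_eqI lit_val_fun_upd_other)
  have flip_l: "lit_val l (flip u) \<longleftrightarrow> \<not> lit_val l u" for u
    unfolding flip_def by (cases l) auto
  have "bij_betw flip (models (insert l C)) (models (insert (lit_neg l) C))"
    by (rule bij_betw_byWitness[where f' = flip])
       (auto simp: flip_def models_def flip_C[unfolded flip_def] flip_l[unfolded flip_def])
  then have "card (models (insert l C)) = card (models (insert (lit_neg l) C))"
    by (rule bij_betw_same_card)
  moreover have "models C = models (insert l C) \<union> models (insert (lit_neg l) C)"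
    and "models (insert l C) \<inter> models (insert (lit_neg l) C) = {}"
    unfolding models_def by auto
  ultimately show ?thesis
    by (simp add: card_Un_disjoint)
qed

lemma card_models:
  fixes C :: "('v::finite) lit set"
  assumes "finite C" and "\<not> trivial_clause C"
  shows "2 ^ card C * card (models C) = card (UNIV :: ('v \<Rightarrow> bool) set)"
  using assms
proof (induction C rule: finite_induct)
  case empty
  then show ?case by (simp add: models_def)
next
  case (insert l C)
  have "var l \<notin> var ` C"
    using insert.hyps(2) insert.prems by (auto simp: var_eq_iff trivial_clause_iff)
  then have "2 * card (models (insert l C)) = card (models C)"
    by (rule card_models_insert)
  moreover have "\<not> trivial_clause C"
    using insert.prems by (auto simp: trivial_clause_iff)
  ultimately have "2 ^ card C * (2 * card (models (insert l C))) = card (UNIV :: ('v \<Rightarrow> bool) set)"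
    using insert.IH by simp
  then show ?case
    using insert.hyps by (simp add: mult.left_commute)
qed

lemma fun_upd_in_models_residual_iff:
  "u(x := b) \<in> models (residual x C) \<longleftrightarrow> u \<in> models (residual x C)"
proof -
  have "var \<eta> \<noteq> x" if "\<eta> \<in> residual x C" for \<eta>
    using that unfolding residual_def by (cases \<eta>) auto
  then show ?thesis
    unfolding models_def by (simp add: lit_val_fun_upd_other)
qed

lemma models_residual_unique:
  assumes "x_orthogonal x D" and "C \<in> D" and "C' \<in> D"
    and "u \<in> models (residual x C)" and "u \<in> models (residual x C')"
  shows "C = C'"
proof (rule ccontr)
  assume "C \<noteq> C'"
  then obtain \<eta> where "\<eta> \<notin> {Pos x, Neg x}" "\<eta> \<in> C" "lit_neg \<eta> \<in> C'"
    using assms(1-3) unfolding x_orthogonal_def by blast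
  moreover from this have "lit_neg \<eta> \<notin> {Pos x, Neg x}"
    by (cases \<eta>) auto
  ultimately show False
    using assms(4,5) unfolding models_def residual_def by force
qed

lemma models_eq_models_residual_Int:
  "models C = models (residual x C) \<inter> models (C \<inter> {Pos x, Neg x})"
  unfolding models_def residual_def by blast

lemma fun_upd_in_models_imp_residual:
  "u(x := b) \<in> models C \<Longrightarrow> u \<in> models (residual x C)"
  using models_eq_models_residual_Int[of C x] fun_upd_in_models_residual_iff[of u x b C] by blast

lemma fun_upd_in_models_iff:
  assumes "u \<in> models (residual x C)"
  shows "u(x := b) \<in> models C \<longleftrightarrow> (Pos x \<in> C \<longrightarrow> b) \<and> (Neg x \<in> C \<longrightarrow> \<not> b)"
proof -
  have "u(x := b) \<in> models C \<longleftrightarrow> u(x := b) \<in> models (C \<inter> {Pos x, Neg x})"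
    using assms models_eq_models_residual_Int[of C x] fun_upd_in_models_residual_iff[of u x b C]
    by blast
  also have "\<dots> \<longleftrightarrow> (Pos x \<in> C \<longrightarrow> lit_val (Pos x) (u(x := b))) \<and> (Neg x \<in> C \<longrightarrow> lit_val (Neg x) (u(x := b)))"
    unfolding models_def by blast
  also have "\<dots> \<longleftrightarrow> (Pos x \<in> C \<longrightarrow> b) \<and> (Neg x \<in> C \<longrightarrow> \<not> b)"
    by simp
  finally show ?thesis .
qed

lemma dnf_iff_models: "dnf D u \<longleftrightarrow> (\<exists>C\<in>D. u \<in> models C)"
  unfolding dnf_def models_def by blast

lemma dnf_fun_upd_differ_iff:
  assumes "\<forall>C\<in>D. \<not> trivial_clause C" and "x_orthogonal x D"
  shows "dnf D (u(x := True)) \<noteq> dnf D (u(x := False)) \<longleftrightarrow>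
    (\<exists>C\<in>D. (Pos x \<in> C \<or> Neg x \<in> C) \<and> u \<in> models (residual x C))"
proof (cases "\<exists>C\<in>D. u \<in> models (residual x C)")
  case False
  then show ?thesis
    unfolding dnf_iff_models using fun_upd_in_models_imp_residual[of u x] by blast
next
  case True
  then obtain C0 where C0: "C0 \<in> D" "u \<in> models (residual x C0)"
    by blast
  have "dnf D (u(x := b)) \<longleftrightarrow> u(x := b) \<in> models C0" for b
  proof
    assume "dnf D (u(x := b))"
    then obtain C where "C \<in> D" and "u(x := b) \<in> models C"
      unfolding dnf_iff_models by blast
    moreover from this have "C = C0"
      using C0 fun_upd_in_models_imp_residual[of u x] models_residual_unique[OF assms(2)] by blast
    ultimately show "u(x := b) \<in> models C0"
      by simp
  qed (use C0(1) dnf_iff_models in blast)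
  then have dnf_upd: "dnf D (u(x := b)) \<longleftrightarrow> (Pos x \<in> C0 \<longrightarrow> b) \<and> (Neg x \<in> C0 \<longrightarrow> \<not> b)" for b
    using fun_upd_in_models_iff[OF C0(2)] by blast
  have "\<not> (Pos x \<in> C0 \<and> Neg x \<in> C0)"
    using assms(1) C0(1) unfolding trivial_clause_def by blast
  then have "dnf D (u(x := True)) \<noteq> dnf D (u(x := False)) \<longleftrightarrow> Pos x \<in> C0 \<or> Neg x \<in> C0"
    unfolding dnf_upd by auto
  also have "\<dots> \<longleftrightarrow> (\<exists>C\<in>D. (Pos x \<in> C \<or> Neg x \<in> C) \<and> u \<in> models (residual x C))"
    using C0 models_residual_unique[OF assms(2) _ C0(1) _ C0(2)] by metis
  finally show ?thesis .
qed

lemma sum_of_bool_models_residual: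
  assumes "x_orthogonal x D" and "D' \<subseteq> D" and "finite D'"
  shows "(\<Sum>C\<in>D'. of_bool (u \<in> models (residual x C)) :: 'a::semiring_1)
    = of_bool (\<exists>C\<in>D'. u \<in> models (residual x C))"
proof (cases "\<exists>C\<in>D'. u \<in> models (residual x C)")
  case True
  then obtain C0 where "C0 \<in> D'" and "u \<in> models (residual x C0)"
    by blast
  then have "D' \<inter> {C. u \<in> models (residual x C)} = {C0}"
    using assms(2) models_residual_unique[OF assms(1)] by blast
  then show ?thesis
    using True assms(3) by simp
qed simp

lemma card_models_residual:
  fixes C :: "('v::finite) lit set"
  assumes "\<not> trivial_clause C" and "Pos x \<in> C \<or> Neg x \<in> C"
  shows "real (card (models (residual x C))) = 2 * card (UNIV :: ('v \<Rightarrow> bool) set) * (1/2) ^ card C"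
proof -
  obtain l where "l \<in> C" and "residual x C = C - {l}"
    using assms unfolding trivial_clause_def residual_def by blast
  then have "card C = Suc (card (residual x C))"
    by (metis card_Suc_Diff1 finite)
  moreover have "2 ^ card (residual x C) * card (models (residual x C)) = card (UNIV :: ('v \<Rightarrow> bool) set)"
    using assms(1) by (intro card_models) (auto simp: residual_def trivial_clause_def)
  then have "2 ^ card (residual x C) * real (card (models (residual x C))) = card (UNIV :: ('v \<Rightarrow> bool) set)"
    by (metis of_nat_mult of_nat_numeral of_nat_power)
  ultimately show ?thesis
    by (simp add: power_one_over field_simps)
qed

theorem mainTheorem9:
  fixes D :: "('v::finite) lit set set" and x :: 'v
  assumes "\<forall>C\<in>D. \<not> trivial_clause C"
    and "x_orthogonal x D"
  shows "influence x (dnf D) = 2 * JW x D"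
proof -
  define Dx where "Dx = {C\<in>D. Pos x \<in> C \<or> Neg x \<in> C}"
  have "(\<Sum>u\<in>UNIV. of_bool (dnf D (u(x := True)) \<noteq> dnf D (u(x := False))) :: real)
      = (\<Sum>u\<in>UNIV. \<Sum>C\<in>Dx. of_bool (u \<in> models (residual x C)))"
    unfolding dnf_fun_upd_differ_iff[OF assms]
    by (rule sum.cong[OF refl], subst sum_of_bool_models_residual[OF assms(2)]) (auto simp: Dx_def)
  also have "\<dots> = (\<Sum>C\<in>Dx. real (card (models (residual x C))))"
    by (subst sum.swap) simp
  also have "\<dots> = 2 * card (UNIV :: ('v \<Rightarrow> bool) set) * JW x D"
    using assms(1) by (simp add: card_models_residual Dx_def JW_def sum_distrib_left)
  finally show ?thesis
    unfolding influence_def uniform_expect_def by simp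
qed

end
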